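(* Let $(W,\odot,\mathbb{1})$ be a monoid and let $(M,+,\mathbb{0},\otimes)$ be an $\omega$-continuous (left) $W$-module. Then for every $W$-wgcl program $C$, the weakest preweighting transformer $\mathrm{wp}[\![C]\!]$ is a well-defined $\omega$-continuous map $\mathrm{Wt}\to\mathrm{Wt}$ on the module of weightings $\mathrm{Wt}=M^{\Sigma}$ (i.e. it preserves suprema of increasing $\omega$-chains). In particular, for every loop $\mathtt{while}(\varphi)\{C\}$ and every $f\in\mathrm{Wt}$, if $\Phi_f(X)=[\neg\varphi]\cdot f+[\varphi]\cdot \mathrm{wp}[\![C]\!](X)$ is its wp-characteristic function with respect to $f$, then $$\mathrm{wp}[\![\mathtt{while}(\varphi)\{C\}]\!](f)=\bigsqcup_{i\in\mathbb{N}}\Phi_f^{\,i}(\mathbb{0}),$$ where $\mathbb{0}$ denotes the constant-$\mathbb{0}$ weighting and $\bigsqcup$ is the supremum with respect to the (pointwise) natural order.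
   Context: A (left) module over a monoid $(W,\odot,\mathbb{1})$ is a commutative monoid $(M,+,\mathbb{0})$ with an action $\otimes\colon W\times M\to M$ such that $(v\odot w)\otimes a=v\otimes(w\otimes a)$, $v\otimes(a+b)=(v\otimes a)+(v\otimes b)$, $\mathbb{1}\otimes a=a$ and $v\otimes\mathbb{0}=\mathbb{0}$ for all $v,w\in W$, $a,b\in M$. The natural order on $M$ is $a\preceq b$ iff there is $c\in M$ with $a+c=b$; $M$ is naturally ordered if $\preceq$ is a partial order (then $\mathbb{0}$ is its least element). $M$ is $\omega$-continuous if it is naturally ordered, every increasing $\omega$-chain in $(M,\preceq)$ has a supremum, and addition (in each argument) and, for each fixed $w\in W$, the map $a\mapsto w\otimes a$ preserve suprema of increasing $\omega$-chains. Program states: $\Sigma$ is the set of states (maps from program variables to values); an expression $E$ has a value $E(\sigma)$ in state $\sigma$; guards $\varphi$ are predicates on states; $\sigma[x\mapsto v]$ is $\sigma$ with $x$ updated to $v$. $W$-wgcl programs are generated by $C::= x:=E \mid C;C \mid \mathtt{if}(\varphi)\{C\}\mathtt{else}\{C\} \mid \{C\}\oplus\{C\} \mid \mathtt{weight}\ a \ (a\in W)\mid \mathtt{while}(\varphi)\{C\}$. Weightings: $\mathrm{Wt}=M^{\Sigma}$ (functions $\Sigma\to M$) with pointwise addition, zero, scalar multiplication $(a\otimes f)(\sigma)=a\otimes f(\sigma)$ and pointwise natural order. For a guard $\varphi$, $([\varphi]\cdot f)(\sigma)=f(\sigma)$ if $\sigma\models\varphi$ and $\mathbb{0}$ otherwise.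 $f[x/E](\sigma)=f(\sigma[x\mapsto E(\sigma)])$. The weakest preweighting transformer is defined by induction on programs: $\mathrm{wp}[\![x:=E]\!](f)=f[x/E]$; $\mathrm{wp}[\![C_1;C_2]\!](f)=\mathrm{wp}[\![C_1]\!](\mathrm{wp}[\![C_2]\!](f))$; $\mathrm{wp}[\![\mathtt{if}(\varphi)\{C_1\}\mathtt{else}\{C_2\}]\!](f)=[\varphi]\cdot\mathrm{wp}[\![C_1]\!](f)+[\neg\varphi]\cdot\mathrm{wp}[\![C_2]\!](f)$; $\mathrm{wp}[\![\{C_1\}\oplus\{C_2\}]\!](f)=\mathrm{wp}[\![C_1]\!](f)+\mathrm{wp}[\![C_2]\!](f)$; $\mathrm{wp}[\![\mathtt{weight}\ a]\!](f)=a\otimes f$; $\mathrm{wp}[\![\mathtt{while}(\varphi)\{C'\}]\!](f)$ is the least fixed point (w.r.t. the pointwise natural order) of $X\mapsto[\neg\varphi]\cdot f+[\varphi]\cdot\mathrm{wp}[\![C']\!](X)$. *)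

theory Defs
  imports Main
begin

text \<open>Monoid W: type class monoid_mult (times, 1). Commutative monoid M: class comm_monoid_add.
  The left action is an explicit parameter act :: 'w => 'm => 'm.\<close>

definition nle :: "'m::comm_monoid_add \<Rightarrow> 'm \<Rightarrow> bool" where
  "nle a b \<longleftrightarrow> (\<exists>c. a + c = b)"

definition is_lub :: "('a \<Rightarrow> 'a \<Rightarrow> bool) \<Rightarrow> 'a set \<Rightarrow> 'a \<Rightarrow> bool" where
  "is_lub le S s \<longleftrightarrow> (\<forall>x\<in>S. le x s) \<and> (\<forall>u. (\<forall>x\<in>S. le x u) \<longrightarrow> le s u)"

definition is_omega_chain :: "('a \<Rightarrow> 'a \<Rightarrow> bool) \<Rightarrow> (nat \<Rightarrow> 'a) \<Rightarrow> bool" where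
  "is_omega_chain le X \<longleftrightarrow> (\<forall>i. le (X i) (X (Suc i)))"

definition omega_cont :: "('a \<Rightarrow> 'a \<Rightarrow> bool) \<Rightarrow> ('a \<Rightarrow> 'a) \<Rightarrow> bool" where
  "omega_cont le g \<longleftrightarrow>
     (\<forall>X s. is_omega_chain le X \<and> is_lub le (range X) s \<longrightarrow> is_lub le (range (\<lambda>i. g (X i))) (g s))"

definition left_module :: "('w::monoid_mult \<Rightarrow> 'm::comm_monoid_add \<Rightarrow> 'm) \<Rightarrow> bool" where
  "left_module act \<longleftrightarrow>
     (\<forall>v w a. act (v * w) a = act v (act w a)) \<and>
     (\<forall>v a b. act v (a + b) = act v a + act v b) \<and>
     (\<forall>a. act 1 a = a) \<and>
     (\<forall>v. act v 0 = 0)"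

definition naturally_ordered :: "'m::comm_monoid_add itself \<Rightarrow> bool" where
  "naturally_ordered _ \<longleftrightarrow> (\<forall>a b::'m. nle a b \<and> nle b a \<longrightarrow> a = b)"

definition omega_continuous_module :: "('w::monoid_mult \<Rightarrow> 'm::comm_monoid_add \<Rightarrow> 'm) \<Rightarrow> bool" where
  "omega_continuous_module act \<longleftrightarrow>
     left_module act \<and>
     naturally_ordered TYPE('m) \<and>
     (\<forall>X::nat \<Rightarrow> 'm. is_omega_chain nle X \<longrightarrow> (\<exists>s. is_lub nle (range X) s)) \<and>
     (\<forall>b::'m. omega_cont nle (\<lambda>a. a + b)) \<and>
     (\<forall>b::'m. omega_cont nle (\<lambda>a. b + a)) \<and>
     (\<forall>w. omega_cont nle (act w))"

type_synonym ('x,'v) state = "'x \<Rightarrow> 'v"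

datatype ('x,'v,'w) wgcl =
    Assign 'x "('x,'v) state \<Rightarrow> 'v"
  | Seq "('x,'v,'w) wgcl" "('x,'v,'w) wgcl"
  | Ite "('x,'v) state \<Rightarrow> bool" "('x,'v,'w) wgcl" "('x,'v,'w) wgcl"
  | Choice "('x,'v,'w) wgcl" "('x,'v,'w) wgcl"
  | Weight 'w
  | While "('x,'v) state \<Rightarrow> bool" "('x,'v,'w) wgcl"

definition wle :: "('s \<Rightarrow> 'm::comm_monoid_add) \<Rightarrow> ('s \<Rightarrow> 'm) \<Rightarrow> bool" where
  "wle f g \<longleftrightarrow> (\<forall>\<sigma>. nle (f \<sigma>) (g \<sigma>))"

definition guard :: "('s \<Rightarrow> bool) \<Rightarrow> ('s \<Rightarrow> 'm::comm_monoid_add) \<Rightarrow> 's \<Rightarrow> 'm" where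
  "guard \<phi> f \<sigma> = (if \<phi> \<sigma> then f \<sigma> else 0)"

definition subst :: "(('x,'v) state \<Rightarrow> 'm) \<Rightarrow> 'x \<Rightarrow> (('x,'v) state \<Rightarrow> 'v) \<Rightarrow> ('x,'v) state \<Rightarrow> 'm" where
  "subst f x E \<sigma> = f (\<sigma>(x := E \<sigma>))"

definition is_lfp_wt :: "(('s \<Rightarrow> 'm::comm_monoid_add) \<Rightarrow> ('s \<Rightarrow> 'm)) \<Rightarrow> ('s \<Rightarrow> 'm) \<Rightarrow> bool" where
  "is_lfp_wt F X \<longleftrightarrow> F X = X \<and> (\<forall>Y. F Y = Y \<longrightarrow> wle X Y)"

definition lfp_wt :: "(('s \<Rightarrow> 'm::comm_monoid_add) \<Rightarrow> ('s \<Rightarrow> 'm)) \<Rightarrow> ('s \<Rightarrow> 'm)" where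
  "lfp_wt F = (THE X. is_lfp_wt F X)"

primrec wp :: "('w::monoid_mult \<Rightarrow> 'm::comm_monoid_add \<Rightarrow> 'm) \<Rightarrow> ('x,'v,'w) wgcl
    \<Rightarrow> (('x,'v) state \<Rightarrow> 'm) \<Rightarrow> (('x,'v) state \<Rightarrow> 'm)" where
  "wp act (Assign x E) f = subst f x E"
| "wp act (Seq C1 C2) f = wp act C1 (wp act C2 f)"
| "wp act (Ite \<phi> C1 C2) f = (\<lambda>\<sigma>. guard \<phi> (wp act C1 f) \<sigma> + guard (\<lambda>\<tau>. \<not> \<phi> \<tau>) (wp act C2 f) \<sigma>)"
| "wp act (Choice C1 C2) f = (\<lambda>\<sigma>. wp act C1 f \<sigma> + wp act C2 f \<sigma>)"
| "wp act (Weight a) f = (\<lambda>\<sigma>. act a (f \<sigma>))"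
| "wp act (While \<phi> C) f =
     lfp_wt (\<lambda>X \<sigma>. guard (\<lambda>\<tau>. \<not> \<phi> \<tau>) f \<sigma> + guard \<phi> (wp act C X) \<sigma>)"

definition charfun :: "('w::monoid_mult \<Rightarrow> 'm::comm_monoid_add \<Rightarrow> 'm) \<Rightarrow> (('x,'v) state \<Rightarrow> bool)
    \<Rightarrow> ('x,'v,'w) wgcl \<Rightarrow> (('x,'v) state \<Rightarrow> 'm) \<Rightarrow> (('x,'v) state \<Rightarrow> 'm) \<Rightarrow> (('x,'v) state \<Rightarrow> 'm)" where
  "charfun act \<phi> C f X = (\<lambda>\<sigma>. guard (\<lambda>\<tau>. \<not> \<phi> \<tau>) f \<sigma> + guard \<phi> (wp act C X) \<sigma>)"

end

theory Submission
  imports Defs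
begin

text \<open>Suprema of weightings are computed pointwise, because M is \<omega>-complete. Substitution,
  pointwise sums, case distinctions on guards and the scalar action are therefore
  \<omega>-continuous on Wt, and \<omega>-continuity is closed under composition, so everything except
  loops is handled by structural induction. For a loop, the characteristic function
  \<Phi> of f is \<omega>-continuous, so by Kleene's fixed point theorem its least fixed point exists
  and is the supremum of the iterates of \<Phi> on 0. Each iterate is \<omega>-continuous as a
  function of f, and a pointwise supremum of \<omega>-continuous maps is again \<omega>-continuous,
  since suprema commute with suprema.\<close>

section \<open>Partial orders given by a relation\<close>

definition is_partial_order :: "('a \<Rightarrow> 'a \<Rightarrow> bool) \<Rightarrow> bool" where
  "is_partial_order le \<longleftrightarrow>
     (\<forall>x. le x x) \<and> (\<forall>x y z. le x y \<longrightarrow> le y z \<longrightarrow> le x z) \<and> (\<forall>x y. le x y \<longrightarrow> le y x \<longrightarrow> x = y)"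

lemma is_partial_order_refl: "is_partial_order le \<Longrightarrow> le x x"
  by (simp add: is_partial_order_def)

lemma is_partial_order_trans: "is_partial_order le \<Longrightarrow> le x y \<Longrightarrow> le y z \<Longrightarrow> le x z"
  unfolding is_partial_order_def by blast

lemma is_partial_order_antisym: "is_partial_order le \<Longrightarrow> le x y \<Longrightarrow> le y x \<Longrightarrow> x = y"
  unfolding is_partial_order_def by blast

lemma is_lub_upper: "is_lub le S s \<Longrightarrow> x \<in> S \<Longrightarrow> le x s"
  unfolding is_lub_def by blast

lemma is_lub_least: "is_lub le S s \<Longrightarrow> (\<And>x. x \<in> S \<Longrightarrow> le x u) \<Longrightarrow> le s u"
  unfolding is_lub_def by blast

lemma is_lub_unique: "is_partial_order le \<Longrightarrow> is_lub le S s \<Longrightarrow> is_lub le S t \<Longrightarrow> s = t"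
  unfolding is_lub_def by (meson is_partial_order_antisym)

lemma is_omega_chain_mono:
  assumes le: "is_partial_order le" and X: "is_omega_chain le X" and "i \<le> j"
  shows "le (X i) (X j)"
  using \<open>i \<le> j\<close>
proof (induction j rule: dec_induct)
  case base
  show ?case by (rule is_partial_order_refl[OF le])
next
  case (step n)
  with X show ?case
    unfolding is_omega_chain_def by (blast intro: is_partial_order_trans[OF le])
qed

lemma omega_cont_mono:
  assumes le: "is_partial_order le" and g: "omega_cont le g" and "le a b"
  shows "le (g a) (g b)"
proof -
  define X where "X i = (if i = 0 then a else b)" for i :: nat
  have "is_omega_chain le X"
    unfolding is_omega_chain_def X_def using \<open>le a b\<close> is_partial_order_refl[OF le] by auto
  moreover have "is_lub le (range X) b"
    unfolding is_lub_def X_def using \<open>le a b\<close> is_partial_order_refl[OF le]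
    by (auto dest: bspec[of _ _ b])
  ultimately have "is_lub le (range (\<lambda>i. g (X i))) (g b)"
    using g unfolding omega_cont_def by blast
  then show ?thesis
    by (rule is_lub_upper) (auto simp: X_def intro: range_eqI[of _ _ 0])
qed

lemma omega_cont_chain:
  "is_partial_order le \<Longrightarrow> omega_cont le g \<Longrightarrow> is_omega_chain le X \<Longrightarrow> is_omega_chain le (\<lambda>i. g (X i))"
  unfolding is_omega_chain_def by (metis omega_cont_mono)

lemma omega_cont_lub:
  "omega_cont le g \<Longrightarrow> is_omega_chain le X \<Longrightarrow> is_lub le (range X) s
    \<Longrightarrow> is_lub le (range (\<lambda>i. g (X i))) (g s)"
  unfolding omega_cont_def by blast

lemma omega_cont_id: "omega_cont le (\<lambda>x. x)"
  unfolding omega_cont_def by simp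

lemma omega_cont_const: "is_partial_order le \<Longrightarrow> omega_cont le (\<lambda>x. c)"
  unfolding omega_cont_def is_lub_def by (auto intro: is_partial_order_refl)

lemma omega_cont_comp:
  assumes le: "is_partial_order le" and g: "omega_cont le g" and h: "omega_cont le h"
  shows "omega_cont le (\<lambda>x. g (h x))"
  unfolding omega_cont_def
proof (intro allI impI, elim conjE)
  fix X s assume X: "is_omega_chain le X" and s: "is_lub le (range X) s"
  show "is_lub le (range (\<lambda>i. g (h (X i)))) (g (h s))"
    using omega_cont_lub[OF g omega_cont_chain[OF le h X] omega_cont_lub[OF h X s]] .
qed

lemma omega_cont_lub_family:
  assumes le: "is_partial_order le" and G: "\<And>i. omega_cont le (G i)"
    and H: "\<And>x. is_lub le (range (\<lambda>i. G i x)) (H x)"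
  shows "omega_cont le H"
  unfolding omega_cont_def
proof (intro allI impI, elim conjE)
  fix X s assume X: "is_omega_chain le X" and s: "is_lub le (range X) s"
  have Gs: "is_lub le (range (\<lambda>j. G i (X j))) (G i s)" for i
    using omega_cont_lub[OF G X s] .
  show "is_lub le (range (\<lambda>j. H (X j))) (H s)"
    unfolding is_lub_def
  proof (intro conjI allI impI ballI)
    fix x assume "x \<in> range (\<lambda>j. H (X j))"
    then obtain j where x: "x = H (X j)" by blast
    have "le (G i (X j)) (H s)" for i
      using is_lub_upper[OF Gs] is_lub_upper[OF H] is_partial_order_trans[OF le] by blast
    then show "le x (H s)"
      unfolding x using is_lub_least[OF H] by blast
  next
    fix u assume u: "\<forall>x\<in>range (\<lambda>j. H (X j)). le x u"
    have "le (G i (X j)) u" for i j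
      using is_lub_upper[OF H] u is_partial_order_trans[OF le] by blast
    then have "le (G i s) u" for i
      using is_lub_least[OF Gs] by blast
    then show "le (H s) u"
      using is_lub_least[OF H] by blast
  qed
qed

lemma iterates_omega_chain:
  assumes le: "is_partial_order le" and bot: "\<And>x. le b x" and F: "omega_cont le F"
  shows "is_omega_chain le (\<lambda>i. (F ^^ i) b)"
  unfolding is_omega_chain_def
proof
  show "le ((F ^^ i) b) ((F ^^ Suc i) b)" for i
    by (induction i) (simp_all add: bot omega_cont_mono[OF le F])
qed

lemma iterates_below_fixed_point:
  assumes le: "is_partial_order le" and bot: "\<And>x. le b x" and F: "omega_cont le F"
    and "F Y = Y"
  shows "le ((F ^^ i) b) Y"
proof (induction i)
  case 0
  show ?case by (simp add: bot)
next
  case (Suc i)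
  then have "le (F ((F ^^ i) b)) (F Y)"
    by (rule omega_cont_mono[OF le F])
  with \<open>F Y = Y\<close> show ?case by simp
qed

lemma lub_iterates_fixed_point:
  assumes le: "is_partial_order le" and bot: "\<And>x. le b x" and F: "omega_cont le F"
    and s: "is_lub le (range (\<lambda>i. (F ^^ i) b)) s"
  shows "F s = s"
proof -
  let ?K = "\<lambda>i. (F ^^ i) b"
  have Fs: "is_lub le (range (\<lambda>i. F (?K i))) (F s)"
    using omega_cont_lub[OF F iterates_omega_chain[OF le bot F] s] .
  have "is_lub le (range ?K) (F s)"
    unfolding is_lub_def
  proof (intro conjI allI impI ballI)
    fix x assume "x \<in> range ?K"
    then obtain i where "x = ?K i" by blast
    then show "le x (F s)"
      using bot is_lub_upper[OF Fs] by (cases i) auto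
  next
    fix u assume "\<forall>x\<in>range ?K. le x u"
    then have "le (F (?K i)) u" for i
      by (metis funpow.simps(2) o_apply rangeI)
    then show "le (F s) u"
      using is_lub_least[OF Fs] by blast
  qed
  then show ?thesis
    using is_lub_unique[OF le] s by blast
qed

lemma kleene_lfp:
  assumes le: "is_partial_order le" and bot: "\<And>x. le b x"
    and complete: "\<And>X. is_omega_chain le X \<Longrightarrow> \<exists>s. is_lub le (range X) s"
    and F: "omega_cont le F"
  obtains s where "is_lub le (range (\<lambda>i. (F ^^ i) b)) s" and "F s = s"
    and "\<And>Y. F Y = Y \<Longrightarrow> le s Y"
proof -
  obtain s where s: "is_lub le (range (\<lambda>i. (F ^^ i) b)) s"
    using complete[OF iterates_omega_chain[OF le bot F]] by blast
  moreover have "F s = s"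
    using lub_iterates_fixed_point[OF le bot F s] .
  moreover have "le s Y" if "F Y = Y" for Y
    using is_lub_least[OF s] iterates_below_fixed_point[OF le bot F that] by blast
  ultimately show thesis
    using that by blast
qed

section \<open>The natural order and weightings\<close>

lemma nle_partial_order:
  assumes "naturally_ordered TYPE('m::comm_monoid_add)"
  shows "is_partial_order (nle :: 'm \<Rightarrow> 'm \<Rightarrow> bool)"
  unfolding is_partial_order_def
proof (intro conjI allI impI)
  show "nle x x" for x :: 'm
    unfolding nle_def by (rule exI[of _ 0]) simp
  show "nle x z" if "nle x y" and "nle y z" for x y z :: 'm
  proof -
    from that obtain c d where "x + c = y" and "y + d = z"
      unfolding nle_def by blast
    then have "x + (c + d) = z"
      by (simp add: add.assoc[symmetric])
    then show ?thesis
      unfolding nle_def by blast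
  qed
  show "x = y" if "nle x y" and "nle y x" for x y :: 'm
    using assms that unfolding naturally_ordered_def by blast
qed

lemma nle_zero: "nle 0 a"
  unfolding nle_def by simp

lemma nle_add_mono:
  assumes "nle a b" and "nle c d"
  shows "nle (a + c) (b + d)"
proof -
  from assms obtain x y where "a + x = b" and "c + y = d"
    unfolding nle_def by blast
  then have "(a + c) + (x + y) = b + d"
    by (metis add.assoc add.left_commute)
  then show ?thesis
    unfolding nle_def by blast
qed

lemma wle_partial_order:
  assumes "naturally_ordered TYPE('m::comm_monoid_add)"
  shows "is_partial_order (wle :: ('s \<Rightarrow> 'm) \<Rightarrow> _)"
  unfolding is_partial_order_def
proof (intro conjI allI impI)
  note nle = nle_partial_order[OF assms]
  show "wle f f" for f :: "'s \<Rightarrow> 'm"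
    unfolding wle_def using is_partial_order_refl[OF nle] by blast
  show "wle f h" if "wle f g" and "wle g h" for f g h :: "'s \<Rightarrow> 'm"
    using that is_partial_order_trans[OF nle] unfolding wle_def by blast
  show "f = g" if "wle f g" and "wle g f" for f g :: "'s \<Rightarrow> 'm"
    using that is_partial_order_antisym[OF nle] unfolding wle_def by (blast intro: ext)
qed

lemma wle_zero: "wle (\<lambda>_. 0) f"
  unfolding wle_def by (simp add: nle_zero)

lemma is_omega_chain_wle_pointwise: "is_omega_chain wle X \<Longrightarrow> is_omega_chain nle (\<lambda>i. X i \<sigma>)"
  unfolding is_omega_chain_def wle_def by blast

lemma is_lub_wle_if_pointwise:
  assumes "\<And>\<sigma>. is_lub nle (range (\<lambda>i. X i \<sigma>)) (s \<sigma>)"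
  shows "is_lub wle (range X) s"
  unfolding is_lub_def wle_def
proof (intro conjI allI impI ballI)
  show "nle (x \<sigma>) (s \<sigma>)" if "x \<in> range X" for x \<sigma>
    using that is_lub_upper[OF assms[of \<sigma>]] by blast
  show "nle (s \<sigma>) (u \<sigma>)" if "\<forall>x\<in>range X. \<forall>\<sigma>. nle (x \<sigma>) (u \<sigma>)" for u \<sigma>
    using that by (intro is_lub_least[OF assms[of \<sigma>]]) blast
qed

lemma is_lfp_wt_unique:
  fixes F :: "('s \<Rightarrow> 'm::comm_monoid_add) \<Rightarrow> ('s \<Rightarrow> 'm)"
  assumes le: "is_partial_order (wle :: ('s \<Rightarrow> 'm) \<Rightarrow> _)" and "is_lfp_wt F X" and "is_lfp_wt F Y"
  shows "X = Y"
  using assms(2,3) unfolding is_lfp_wt_def by (metis is_partial_order_antisym[OF le])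

section \<open>Continuity of the weakest preweighting\<close>

definition omega_continuous_monoid :: "'m::comm_monoid_add itself \<Rightarrow> bool" where
  "omega_continuous_monoid _ \<longleftrightarrow>
     naturally_ordered TYPE('m) \<and>
     (\<forall>X::nat \<Rightarrow> 'm. is_omega_chain nle X \<longrightarrow> (\<exists>s. is_lub nle (range X) s)) \<and>
     (\<forall>b::'m. omega_cont nle (\<lambda>a. a + b))"

lemma omega_continuous_module_monoid:
  "omega_continuous_module (act :: 'w::monoid_mult \<Rightarrow> 'm::comm_monoid_add \<Rightarrow> 'm)
    \<Longrightarrow> omega_continuous_monoid TYPE('m)"
  unfolding omega_continuous_module_def omega_continuous_monoid_def by blast

lemma omega_continuous_module_act:
  "omega_continuous_module act \<Longrightarrow> omega_cont nle (act w)"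
  unfolding omega_continuous_module_def by (elim conjE) (rule spec)

context
  assumes M: "omega_continuous_monoid TYPE('m::comm_monoid_add)"
begin

lemma nle_partial_order': "is_partial_order (nle :: 'm \<Rightarrow> 'm \<Rightarrow> bool)"
  using M nle_partial_order unfolding omega_continuous_monoid_def by blast

lemma wle_partial_order': "is_partial_order (wle :: ('s \<Rightarrow> 'm) \<Rightarrow> _)"
  using M wle_partial_order unfolding omega_continuous_monoid_def by blast

lemma nle_chain_complete: "is_omega_chain nle (X :: nat \<Rightarrow> 'm) \<Longrightarrow> \<exists>s. is_lub nle (range X) s"
  using M unfolding omega_continuous_monoid_def by blast

lemma wle_chain_pointwise_lub:
  assumes "is_omega_chain wle (X :: nat \<Rightarrow> 's \<Rightarrow> 'm)"
  shows "\<exists>s. \<forall>\<sigma>. is_lub nle (range (\<lambda>i. X i \<sigma>)) (s \<sigma>)"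
proof (rule choice, rule allI)
  show "\<exists>l. is_lub nle (range (\<lambda>i. X i \<sigma>)) l" for \<sigma>
    by (rule nle_chain_complete[OF is_omega_chain_wle_pointwise[OF assms]])
qed

lemma wle_chain_complete:
  assumes "is_omega_chain wle (X :: nat \<Rightarrow> 's \<Rightarrow> 'm)"
  shows "\<exists>s. is_lub wle (range X) s"
proof -
  obtain s where "\<forall>\<sigma>. is_lub nle (range (\<lambda>i. X i \<sigma>)) (s \<sigma>)"
    using wle_chain_pointwise_lub[OF assms] ..
  then have "is_lub wle (range X) s"
    by (intro is_lub_wle_if_pointwise) blast
  then show ?thesis by blast
qed

lemma is_lub_wle_pointwise:
  assumes X: "is_omega_chain wle (X :: nat \<Rightarrow> 's \<Rightarrow> 'm)" and s: "is_lub wle (range X) s"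
  shows "is_lub nle (range (\<lambda>i. X i \<sigma>)) (s \<sigma>)"
proof -
  obtain t where "\<forall>\<sigma>. is_lub nle (range (\<lambda>i. X i \<sigma>)) (t \<sigma>)"
    using wle_chain_pointwise_lub[OF X] ..
  then have t: "is_lub nle (range (\<lambda>i. X i \<sigma>)) (t \<sigma>)" for \<sigma>
    by blast
  have "s = t"
    using is_lub_unique[OF wle_partial_order' s is_lub_wle_if_pointwise[OF t]] .
  with t show ?thesis by simp
qed

lemma omega_cont_wleI:
  assumes "\<And>X s \<sigma>. is_omega_chain wle X \<Longrightarrow> (\<And>\<sigma>. is_lub nle (range (\<lambda>i. X i \<sigma>)) (s \<sigma>))
    \<Longrightarrow> is_lub nle (range (\<lambda>i. F (X i) \<sigma>)) (F s \<sigma>)"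
  shows "omega_cont wle (F :: ('s \<Rightarrow> 'm) \<Rightarrow> ('s \<Rightarrow> 'm))"
  unfolding omega_cont_def
proof (intro allI impI, elim conjE)
  fix X :: "nat \<Rightarrow> 's \<Rightarrow> 'm" and s
  assume X: "is_omega_chain wle X" and s: "is_lub wle (range X) s"
  have "\<And>\<sigma>. is_lub nle (range (\<lambda>i. X i \<sigma>)) (s \<sigma>)"
    using is_lub_wle_pointwise[OF X s] .
  then show "is_lub wle (range (\<lambda>i. F (X i))) (F s)"
    by (intro is_lub_wle_if_pointwise assms[OF X])
qed

lemma omega_cont_wle_pointwise:
  assumes A: "omega_cont wle (A :: ('s \<Rightarrow> 'm) \<Rightarrow> ('s \<Rightarrow> 'm))" and X: "is_omega_chain wle X"
    and s: "\<And>\<sigma>. is_lub nle (range (\<lambda>i. X i \<sigma>)) (s \<sigma>)"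
  shows "is_omega_chain nle (\<lambda>i. A (X i) \<tau>)" and "is_lub nle (range (\<lambda>i. A (X i) \<tau>)) (A s \<tau>)"
proof -
  have AX: "is_omega_chain wle (\<lambda>i. A (X i))"
    by (rule omega_cont_chain[OF wle_partial_order' A X])
  then show "is_omega_chain nle (\<lambda>i. A (X i) \<tau>)"
    using is_omega_chain_wle_pointwise[of _ \<tau>] by blast
  have "is_lub wle (range (\<lambda>i. A (X i))) (A s)"
    by (rule omega_cont_lub[OF A X is_lub_wle_if_pointwise[OF s]])
  then show "is_lub nle (range (\<lambda>i. A (X i) \<tau>)) (A s \<tau>)"
    using is_lub_wle_pointwise[OF AX, of "A s" \<tau>] by blast
qed

lemma omega_cont_add_right: "omega_cont nle (\<lambda>x. x + c :: 'm)"
  using M unfolding omega_continuous_monoid_def by blast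

lemma omega_cont_add_left: "omega_cont nle (\<lambda>x. c + x :: 'm)"
  using omega_cont_add_right[of c] by (simp add: add.commute)

lemma is_lub_add:
  fixes a b :: "nat \<Rightarrow> 'm"
  assumes a: "is_omega_chain nle a" and b: "is_omega_chain nle b"
    and sa: "is_lub nle (range a) sa" and sb: "is_lub nle (range b) sb"
  shows "is_lub nle (range (\<lambda>i. a i + b i)) (sa + sb)"
  unfolding is_lub_def
proof (intro conjI allI impI ballI)
  fix x assume "x \<in> range (\<lambda>i. a i + b i)"
  then show "nle x (sa + sb)"
    using is_lub_upper[OF sa] is_lub_upper[OF sb] nle_add_mono by blast
next
  note le = nle_partial_order'
  fix u assume u: "\<forall>x\<in>range (\<lambda>i. a i + b i). nle x u"
  \<comment> \<open>both chains are increasing, so the diagonal dominates every \<open>a i + b j\<close>\<close>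
  have "nle (a i + b j) u" for i j
  proof -
    have "nle (a i + b j) (a (max i j) + b (max i j))"
      by (intro nle_add_mono is_omega_chain_mono[OF le]) (simp_all add: a b)
    with u show ?thesis
      using is_partial_order_trans[OF le] by blast
  qed
  then have "nle (sa + b j) u" for j
    using is_lub_least[OF omega_cont_lub[OF omega_cont_add_right a sa]] by blast
  then show "nle (sa + sb) u"
    using is_lub_least[OF omega_cont_lub[OF omega_cont_add_left b sb]] by blast
qed

lemma omega_cont_wle_if:
  assumes "omega_cont wle (A :: ('s \<Rightarrow> 'm) \<Rightarrow> ('s \<Rightarrow> 'm))" and "omega_cont wle B"
  shows "omega_cont wle (\<lambda>f \<sigma>. if \<phi> \<sigma> then A f \<sigma> else B f \<sigma>)"
proof (rule omega_cont_wleI)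
  fix X :: "nat \<Rightarrow> 's \<Rightarrow> 'm" and s \<sigma>
  assume "is_omega_chain wle X" and "\<And>\<sigma>. is_lub nle (range (\<lambda>i. X i \<sigma>)) (s \<sigma>)"
  then show "is_lub nle (range (\<lambda>i. if \<phi> \<sigma> then A (X i) \<sigma> else B (X i) \<sigma>))
      (if \<phi> \<sigma> then A s \<sigma> else B s \<sigma>)"
    using omega_cont_wle_pointwise(2)[OF assms(1)] omega_cont_wle_pointwise(2)[OF assms(2)] by simp
qed

lemma omega_cont_wle_add:
  assumes "omega_cont wle (A :: ('s \<Rightarrow> 'm) \<Rightarrow> ('s \<Rightarrow> 'm))" and "omega_cont wle B"
  shows "omega_cont wle (\<lambda>f \<sigma>. A f \<sigma> + B f \<sigma>)"
proof (rule omega_cont_wleI)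
  fix X :: "nat \<Rightarrow> 's \<Rightarrow> 'm" and s \<sigma>
  assume "is_omega_chain wle X" and "\<And>\<sigma>. is_lub nle (range (\<lambda>i. X i \<sigma>)) (s \<sigma>)"
  note hA = omega_cont_wle_pointwise[OF assms(1) this] and hB = omega_cont_wle_pointwise[OF assms(2) this]
  show "is_lub nle (range (\<lambda>i. A (X i) \<sigma> + B (X i) \<sigma>)) (A s \<sigma> + B s \<sigma>)"
    by (rule is_lub_add[OF hA(1) hB(1) hA(2) hB(2)])
qed

lemma omega_cont_subst: "omega_cont wle (\<lambda>f :: ('x,'v) state \<Rightarrow> 'm. subst f x E)"
  unfolding subst_def by (rule omega_cont_wleI)

lemma omega_cont_act_pointwise:
  assumes act: "omega_cont nle (act a)"
  shows "omega_cont wle (\<lambda>(f :: 's \<Rightarrow> 'm) \<sigma>. act a (f \<sigma>))"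
proof (rule omega_cont_wleI)
  fix X :: "nat \<Rightarrow> 's \<Rightarrow> 'm" and s \<sigma>
  assume X: "is_omega_chain wle X" and s: "\<And>\<sigma>. is_lub nle (range (\<lambda>i. X i \<sigma>)) (s \<sigma>)"
  show "is_lub nle (range (\<lambda>i. act a (X i \<sigma>))) (act a (s \<sigma>))"
    using omega_cont_lub[OF act is_omega_chain_wle_pointwise[OF X] s] .
qed

lemma wp_While_eq_lfp_wt: "wp act (While \<phi> C) f = lfp_wt (charfun act \<phi> C f)"
  unfolding charfun_def[abs_def] by simp

lemma charfun_eq_if: "charfun act \<phi> C f X = (\<lambda>\<sigma>. if \<phi> \<sigma> then wp act C X \<sigma> else f \<sigma>)"
  by (simp add: charfun_def guard_def fun_eq_iff)

lemma wp_While_kleene: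
  fixes act :: "'w::monoid_mult \<Rightarrow> 'm \<Rightarrow> 'm" and C :: "('x,'v,'w) wgcl"
  assumes C: "omega_cont wle (wp act C)"
  shows "\<exists>!X. is_lfp_wt (charfun act \<phi> C f) X"
    and "is_lub wle (range (\<lambda>i. (charfun act \<phi> C f ^^ i) (\<lambda>_. 0))) (wp act (While \<phi> C) f)"
proof -
  let ?F = "charfun act \<phi> C f"
  have F: "omega_cont wle ?F"
    unfolding charfun_eq_if
    by (rule omega_cont_wle_if[OF C omega_cont_const[OF wle_partial_order']])
  obtain s where s: "is_lub wle (range (\<lambda>i. (?F ^^ i) (\<lambda>_. 0))) s"
    and "?F s = s" and "\<And>Y. ?F Y = Y \<Longrightarrow> wle s Y"
    using kleene_lfp[OF wle_partial_order' wle_zero wle_chain_complete F] by blast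
  then have lfp: "is_lfp_wt ?F s"
    unfolding is_lfp_wt_def by blast
  then show "\<exists>!X. is_lfp_wt ?F X"
    using is_lfp_wt_unique[OF wle_partial_order'] by blast
  have "wp act (While \<phi> C) f = s"
    unfolding wp_While_eq_lfp_wt lfp_wt_def
    using lfp is_lfp_wt_unique[OF wle_partial_order'] by blast
  with s show "is_lub wle (range (\<lambda>i. (?F ^^ i) (\<lambda>_. 0))) (wp act (While \<phi> C) f)"
    by simp
qed

lemma omega_cont_wp_While:
  fixes act :: "'w::monoid_mult \<Rightarrow> 'm \<Rightarrow> 'm" and C :: "('x,'v,'w) wgcl"
  assumes C: "omega_cont wle (wp act C)"
  shows "omega_cont wle (wp act (While \<phi> C))"
proof (rule omega_cont_lub_family[OF wle_partial_order'])
  let ?G = "\<lambda>i f. (charfun act \<phi> C f ^^ i) (\<lambda>_. 0)"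
  show "is_lub wle (range (\<lambda>i. ?G i f)) (wp act (While \<phi> C) f)" for f
    by (rule wp_While_kleene(2)[OF C])
  show "omega_cont wle (?G i)" for i
  proof (induction i)
    case 0
    show ?case by (simp add: omega_cont_const[OF wle_partial_order'])
  next
    case (Suc i)
    have "?G (Suc i) = (\<lambda>f \<sigma>. if \<phi> \<sigma> then wp act C (?G i f) \<sigma> else f \<sigma>)"
      by (simp add: charfun_eq_if)
    then show ?case
      using omega_cont_wle_if[OF omega_cont_comp[OF wle_partial_order' C Suc.IH] omega_cont_id]
      by simp
  qed
qed

lemma omega_cont_wp:
  fixes act :: "'w::monoid_mult \<Rightarrow> 'm \<Rightarrow> 'm" and C :: "('x,'v,'w) wgcl"
  assumes act: "\<And>a. omega_cont nle (act a)"
  shows "omega_cont wle (wp act C)"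
proof (induction C)
  case (Assign x E)
  show ?case using omega_cont_subst by simp
next
  case (Seq C1 C2)
  then show ?case using omega_cont_comp[OF wle_partial_order'] by simp
next
  case (Ite \<phi> C1 C2)
  have "wp act (Ite \<phi> C1 C2) = (\<lambda>f \<sigma>. if \<phi> \<sigma> then wp act C1 f \<sigma> else wp act C2 f \<sigma>)"
    by (simp add: fun_eq_iff guard_def)
  then show ?case using omega_cont_wle_if[OF Ite.IH] by simp
next
  case (Choice C1 C2)
  then show ?case using omega_cont_wle_add by simp
next
  case (Weight a)
  show ?case using omega_cont_act_pointwise[OF act] by simp
next
  case (While \<phi> C)
  then show ?case by (rule omega_cont_wp_While)
qed

end

theorem mainTheorem1:
  fixes act :: "'w::monoid_mult \<Rightarrow> 'm::comm_monoid_add \<Rightarrow> 'm"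
  assumes "omega_continuous_module act"
  shows "(\<forall>C :: ('x,'v,'w) wgcl. omega_cont wle (wp act C))
       \<and> (\<forall>(\<phi> :: ('x,'v) state \<Rightarrow> bool) (C :: ('x,'v,'w) wgcl) (f :: ('x,'v) state \<Rightarrow> 'm).
            (\<exists>!X. is_lfp_wt (charfun act \<phi> C f) X)
          \<and> is_lub wle (range (\<lambda>i. (charfun act \<phi> C f ^^ i) (\<lambda>_. 0)))
                       (wp act (While \<phi> C) f))"
proof -
  have M: "omega_continuous_monoid TYPE('m)"
    using omega_continuous_module_monoid[OF assms] .
  have wp: "omega_cont wle (wp act C)" for C :: "('x,'v,'w) wgcl"
    using omega_cont_wp[OF M omega_continuous_module_act[OF assms]] .
  show ?thesis
    using wp wp_While_kleene[OF M wp] by simp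
qed

end
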